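(* Let $V,K,L$ be positive integers, $\boldsymbol\epsilon\in[0,1]^V$, and let $V_1,\dots,V_L$ be pairwise disjoint finite sets of rays (ray $j$ "belongs to position $l$" if $j\in V_l$), each with $|V_l|\ge K$; each ray $j$ has a vector $\mathbf p_j=(p_{ij})_{i=1}^V\in[0,1]^V$. Run the multi-position greedy algorithm: $\mathbf b^0=\boldsymbol\epsilon$, $A_0=V_1\cup\dots\cup V_L$, $J_l=\emptyset$ for all $l$; at iteration $t=1,2,\dots$ (while $A_{t-1}\neq\emptyset$) choose $j_t\in\arg\min_{j\in A_{t-1}}\sum_i b^{t-1}_i p_{ij}$, let $l_t$ be its position, add $j_t$ to $J_{l_t}$, set $\mathbf b^t=\mathbf b^{t-1}\odot\mathbf p_{j_t}$, and set $A_t=A_{t-1}\setminus\{j_t\}$, except that if $|J_{l_t}|=K$ then $A_t=A_{t-1}\setminus V_{l_t}$ (position $l_t$ is closed). This runs exactly $LK$ iterations. Let $f^t=\sum_i b_i^t$ and $E=\sum_i\epsilon_i$. Suppose real numbers $\overline{\mathrm{OPT}}_0\le\overline{\mathrm{OPT}}_1\le\dots\le\overline{\mathrm{OPT}}_{L-1}$ are such that for every $t\in\{0,\dots,LK-1\}$ the set $A_t$ contains a nonempty subset $S$ with $|S|\le LK$ and $\sum_{i=1}^V\prod_{j\in S}p_{ij}\le \overline{\mathrm{OPT}}_{\lfloor t/K\rfloor}$. Then $$f^{LK}\le \frac{E}{e}+\sum_{u=0}^{L-1}\gamma_u\,\overline{\mathrm{OPT}}_u,\qquad \gamma_u=\B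ig(1-e^{-1/L}\Big)\Big(e^{-1/L}\Big)^{L-1-u}.$$
   Context: $\odot$ denotes coordinatewise product; $e$ is Euler's number. The quantity $\overline{\mathrm{OPT}}_u$ plays the role of the optimum cost still achievable with available rays after $u$ positions have been closed; at most $\lfloor t/K\rfloor$ positions are closed after $t$ iterations. *)

theory Defs
  imports Complex_Main
begin

text \<open>Coordinates are indexed by i < nV (i.e. 0..nV-1 instead of 1..V); positions by l < L.
  Iteration t+1 of the paper (t = 0,1,...) chooses jj t (= j_{t+1}) with position ll t (= l_{t+1}).
  b t, A t, J t are b^t, A_t and (J_l)_l after t iterations.\<close>

definition greedy_run ::
  "nat \<Rightarrow> nat \<Rightarrow> nat \<Rightarrow> (nat \<Rightarrow> real) \<Rightarrow> (nat \<Rightarrow> 'r set) \<Rightarrow> ('r \<Rightarrow> nat \<Rightarrow> real)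
   \<Rightarrow> (nat \<Rightarrow> 'r) \<Rightarrow> (nat \<Rightarrow> nat) \<Rightarrow> (nat \<Rightarrow> nat \<Rightarrow> real) \<Rightarrow> (nat \<Rightarrow> 'r set)
   \<Rightarrow> (nat \<Rightarrow> nat \<Rightarrow> 'r set) \<Rightarrow> bool" where
  "greedy_run nV K L eps Vs p jj ll b A J \<longleftrightarrow>
     b 0 = eps \<and> A 0 = (\<Union>l<L. Vs l) \<and> (\<forall>l. J 0 l = {}) \<and>
     (\<forall>t < L * K.
        jj t \<in> A t \<and>
        (\<forall>j \<in> A t. (\<Sum>i<nV. b t i * p (jj t) i) \<le> (\<Sum>i<nV. b t i * p j i)) \<and>
        ll t < L \<and> jj t \<in> Vs (ll t) \<and>
        J (Suc t) = (J t)(ll t := insert (jj t) (J t (ll t))) \<and>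
        b (Suc t) = (\<lambda>i. b t i * p (jj t) i) \<and>
        A (Suc t) = (if card (J (Suc t) (ll t)) = K then A t - Vs (ll t) else A t - {jj t}))"

definition gamma_coef :: "nat \<Rightarrow> nat \<Rightarrow> real" where
  "gamma_coef L u = (1 - exp (- 1 / real L)) * (exp (- 1 / real L)) ^ (L - 1 - u)"

end

theory Submission
  imports Defs
begin

text \<open>Fix a step t and a witness set S \<subseteq> A t with cost at most OPT.  By the union bound
  1 - \<Prod>p \<le> \<Sum>(1 - p) and the minimality of the greedy choice, the step reduces f by at least
  (f - OPT) / |S| \<ge> (f - OPT) / (LK), so f^{t+1} \<le> a f^t + (1 - a) OPT with a = e^{-1/(LK)},
  using 1 - 1/n \<le> e^{-1/n}.  Within block u (steps uK, ..., uK + K - 1) the bound OPT_u is fixed, so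
  the K steps contract f - OPT_u by c = a^K = e^{-1/L}; unrolling the L blocks gives
  f^{LK} \<le> c^L E + \<Sum>_u c^{L-1-u} (1 - c) OPT_u with c^L = e^{-1}.\<close>

lemma one_minus_prod_le_sum_one_minus:
  fixes q :: "'a \<Rightarrow> real"
  assumes "\<And>j. j \<in> S \<Longrightarrow> 0 \<le> q j \<and> q j \<le> 1"
  shows "1 - prod q S \<le> (\<Sum>j\<in>S. 1 - q j)"
  using assms
proof (induction S rule: infinite_finite_induct)
  case (insert x F)
  have "prod q F \<le> 1"
    using insert.prems by (intro prod_le_1) auto
  then have "0 \<le> (1 - q x) * (1 - prod q F)"
    using insert.prems by simp
  then have "1 - q x * prod q F \<le> (1 - q x) + (1 - prod q F)"
    by (simp add: algebra_simps)
  then show ?case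
    using insert by auto
qed simp_all

lemma contraction_step_le:
  fixes f g h Q m n a :: real
  assumes "1 \<le> m" "m \<le> n" and gain: "f - g \<le> m * (f - h)"
    and "g \<le> Q" "h \<le> f" "1 - 1 / n \<le> a" "a \<le> 1"
  shows "h \<le> a * f + (1 - a) * Q"
proof (cases "f \<le> Q")
  case True
  then have "0 \<le> (1 - a) * (Q - f)"
    using \<open>a \<le> 1\<close> by simp
  then show ?thesis
    using \<open>h \<le> f\<close> by (simp add: algebra_simps)
next
  case False
  have "(f - Q) / n \<le> (f - g) / n"
    using assms by (simp add: divide_right_mono)
  also have "\<dots> \<le> (f - g) / m"
    using assms False by (intro divide_left_mono) auto
  also have "\<dots> \<le> f - h"
    using assms by (simp add: divide_le_eq mult.commute)
  finally have "h \<le> (1 - 1 / n) * f + (1 / n) * Q"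
    by (simp add: algebra_simps diff_divide_distrib)
  moreover have "0 \<le> (a - (1 - 1 / n)) * (f - Q)"
    using assms False by auto
  moreover have "(a - (1 - 1 / n)) * (f - Q) = a * f + (1 - a) * Q - ((1 - 1 / n) * f + (1 / n) * Q)"
    by (simp add: algebra_simps diff_divide_distrib)
  ultimately show ?thesis
    by linarith
qed

lemma affine_recurrence_const_le:
  fixes x :: "nat \<Rightarrow> real"
  assumes "0 \<le> a" "\<And>r. r < R \<Longrightarrow> x (s + Suc r) \<le> a * x (s + r) + (1 - a) * Q" "r \<le> R"
  shows "x (s + r) - Q \<le> a ^ r * (x s - Q)"
  using \<open>r \<le> R\<close>
proof (induction r)
  case (Suc r)
  then have "x (s + Suc r) - Q \<le> a * (x (s + r) - Q)"
    using assms(2) by (auto simp: algebra_simps)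
  also have "\<dots> \<le> a * (a ^ r * (x s - Q))"
    using Suc assms(1) by (simp add: mult_left_mono)
  finally show ?case
    by simp
qed simp

lemma affine_recurrence_le:
  fixes y Q :: "nat \<Rightarrow> real"
  assumes "0 \<le> c" "\<And>u. u < N \<Longrightarrow> y (Suc u) \<le> c * y u + (1 - c) * Q u" "u \<le> N"
  shows "y u \<le> c ^ u * y 0 + (\<Sum>v<u. c ^ (u - 1 - v) * (1 - c) * Q v)"
  using \<open>u \<le> N\<close>
proof (induction u)
  case (Suc u)
  have shift: "c * (\<Sum>v<u. c ^ (u - 1 - v) * (1 - c) * Q v)
      = (\<Sum>v<u. c ^ (Suc u - 1 - v) * (1 - c) * Q v)"
  proof -
    have "Suc u - 1 - v = Suc (u - 1 - v)" if "v < u" for v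
      using that by simp
    then show ?thesis
      unfolding sum_distrib_left by (intro sum.cong) auto
  qed
  have "y (Suc u) \<le> c * y u + (1 - c) * Q u"
    using Suc assms(2) by simp
  also have "\<dots> \<le> c * (c ^ u * y 0 + (\<Sum>v<u. c ^ (u - 1 - v) * (1 - c) * Q v)) + (1 - c) * Q u"
    using Suc assms(1) by (simp add: mult_left_mono)
  also have "\<dots> = c ^ Suc u * y 0 + (\<Sum>v<Suc u. c ^ (Suc u - 1 - v) * (1 - c) * Q v)"
    using shift by (simp add: algebra_simps)
  finally show ?case .
qed simp

locale greedy_setting =
  fixes nV K L :: nat
    and eps :: "nat \<Rightarrow> real"
    and Vs :: "nat \<Rightarrow> 'r set"
    and p :: "'r \<Rightarrow> nat \<Rightarrow> real"
    and jj :: "nat \<Rightarrow> 'r" and ll :: "nat \<Rightarrow> nat"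
    and b :: "nat \<Rightarrow> nat \<Rightarrow> real" and A :: "nat \<Rightarrow> 'r set" and J :: "nat \<Rightarrow> nat \<Rightarrow> 'r set"
  assumes K_pos: "K > 0"
    and eps_unit: "\<forall>i<nV. 0 \<le> eps i \<and> eps i \<le> 1"
    and finite_Vs: "\<forall>l<L. finite (Vs l)"
    and p_unit: "\<forall>j \<in> (\<Union>l<L. Vs l). \<forall>i<nV. 0 \<le> p j i \<and> p j i \<le> 1"
    and run: "greedy_run nV K L eps Vs p jj ll b A J"
begin

definition cost :: "nat \<Rightarrow> real" where
  "cost t = (\<Sum>i<nV. b t i)"

lemma initial: "b 0 = eps" "A 0 = (\<Union>l<L. Vs l)"
  using run by (simp_all add: greedy_run_def)

lemma step:
  assumes "t < L * K"
  shows "jj t \<in> A t" "\<And>j. j \<in> A t \<Longrightarrow> (\<Sum>i<nV. b t i * p (jj t) i) \<le> (\<Sum>i<nV. b t i * p j i)"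
    "b (Suc t) = (\<lambda>i. b t i * p (jj t) i)" "A (Suc t) \<subseteq> A t"
  using run assms by (auto simp: greedy_run_def split: if_splits)

lemma finite_A0: "finite (A 0)"
  using finite_Vs by (simp add: initial)

lemma A_subset_A0: "t \<le> L * K \<Longrightarrow> A t \<subseteq> A 0"
proof (induction t)
  case (Suc t)
  then show ?case
    using step(4)[of t] by auto
qed simp

lemma p_unit_A:
  assumes "t \<le> L * K" "j \<in> A t" "i < nV"
  shows "0 \<le> p j i \<and> p j i \<le> 1"
proof -
  have "j \<in> (\<Union>l<L. Vs l)"
    using A_subset_A0[OF assms(1)] assms(2) by (auto simp: initial)
  then show ?thesis
    using p_unit assms(3) by blast
qed

lemma b_unit: "t \<le> L * K \<Longrightarrow> i < nV \<Longrightarrow> 0 \<le> b t i \<and> b t i \<le> 1"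
proof (induction t arbitrary: i)
  case 0
  then show ?case
    using eps_unit by (simp add: initial)
next
  case (Suc t)
  then show ?case
    using step(3)[of t] step(1)[of t] p_unit_A[of t "jj t" i] by (auto intro: mult_le_one)
qed

lemma greedy_gain:
  assumes t: "t < L * K" and S: "S \<subseteq> A t"
  shows "cost t - (\<Sum>i<nV. b t i * (\<Prod>j\<in>S. p j i)) \<le> real (card S) * (cost t - cost (Suc t))"
proof -
  define h where "h j = (\<Sum>i<nV. b t i * p j i)" for j
  have p_S: "\<And>i j. i < nV \<Longrightarrow> j \<in> S \<Longrightarrow> 0 \<le> p j i \<and> p j i \<le> 1"
    using S t p_unit_A[of t] by auto
  have "cost t - (\<Sum>i<nV. b t i * (\<Prod>j\<in>S. p j i)) = (\<Sum>i<nV. b t i * (1 - (\<Prod>j\<in>S. p j i)))"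
    by (simp add: cost_def algebra_simps sum_subtractf)
  also have "\<dots> \<le> (\<Sum>i<nV. b t i * (\<Sum>j\<in>S. 1 - p j i))"
    using b_unit t p_S
    by (intro sum_mono mult_left_mono one_minus_prod_le_sum_one_minus) auto
  also have "\<dots> = (\<Sum>j\<in>S. cost t - h j)"
    by (simp add: cost_def h_def sum_distrib_left algebra_simps sum_subtractf sum.swap[of _ S])
  also have "\<dots> \<le> (\<Sum>j\<in>S. cost t - h (jj t))"
    using step(2)[OF t] S by (intro sum_mono) (auto simp: h_def)
  also have "\<dots> = real (card S) * (cost t - cost (Suc t))"
    by (simp add: h_def cost_def step(3)[OF t])
  finally show ?thesis .
qed

lemma cost_step_le:
  assumes t: "t < L * K" and S: "S \<subseteq> A t" "S \<noteq> {}" "card S \<le> L * K"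
    and opt: "(\<Sum>i<nV. \<Prod>j\<in>S. p j i) \<le> Q"
  shows "cost (Suc t) \<le> exp (- 1 / real (L * K)) * cost t + (1 - exp (- 1 / real (L * K))) * Q"
proof (rule contraction_step_le[OF _ _ greedy_gain[OF t S(1)]])
  have "S \<subseteq> A 0"
    using S(1) A_subset_A0[of t] t by auto
  then have "finite S"
    using finite_A0 by (rule finite_subset)
  then show "1 \<le> real (card S)"
    using S(2) by (simp add: Suc_le_eq card_gt_0_iff)
  show "real (card S) \<le> real (L * K)"
    using S(3) by (simp only: of_nat_le_iff)
  have "b t i * (\<Prod>j\<in>S. p j i) \<le> (\<Prod>j\<in>S. p j i)" if i: "i < nV" for i
  proof -
    have "0 \<le> (\<Prod>j\<in>S. p j i)"
      using p_unit_A[of t _ i] S(1) t i by (intro prod_nonneg) auto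
    then show ?thesis
      using b_unit[OF _ i, of t] t by (simp add: mult_left_le_one_le)
  qed
  then have "(\<Sum>i<nV. b t i * (\<Prod>j\<in>S. p j i)) \<le> (\<Sum>i<nV. \<Prod>j\<in>S. p j i)"
    by (intro sum_mono) simp
  then show "(\<Sum>i<nV. b t i * (\<Prod>j\<in>S. p j i)) \<le> Q"
    using opt by linarith
  have "b t i * p (jj t) i \<le> b t i" if i: "i < nV" for i
    using b_unit[OF _ i, of t] p_unit_A[OF _ step(1)[OF t] i] t by (simp add: mult_left_le)
  then show "cost (Suc t) \<le> cost t"
    unfolding cost_def step(3)[OF t] by (intro sum_mono) simp
  show "1 - 1 / real (L * K) \<le> exp (- 1 / real (L * K))"
    using exp_ge_add_one_self[of "- 1 / real (L * K)"] by linarith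
  show "exp (- 1 / real (L * K)) \<le> 1"
    by simp
qed

lemma cost_block_le:
  assumes u: "u < L"
    and opt: "\<forall>t < L * K. \<exists>S. S \<subseteq> A t \<and> S \<noteq> {} \<and> card S \<le> L * K \<and>
                (\<Sum>i<nV. \<Prod>j\<in>S. p j i) \<le> OPT (t div K)"
  shows "cost (Suc u * K) \<le> exp (- 1 / real L) * cost (u * K) + (1 - exp (- 1 / real L)) * OPT u"
proof -
  define a where "a = exp (- 1 / real (L * K))"
  have "cost (u * K + Suc r) \<le> a * cost (u * K + r) + (1 - a) * OPT u" if r: "r < K" for r
  proof -
    have "u * K + r < Suc u * K"
      using r by simp
    also have "\<dots> \<le> L * K"
      using u by (intro mult_right_mono) auto
    finally have t: "u * K + r < L * K" .
    then obtain S where "S \<subseteq> A (u * K + r)" "S \<noteq> {}" "card S \<le> L * K"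
        "(\<Sum>i<nV. \<Prod>j\<in>S. p j i) \<le> OPT ((u * K + r) div K)"
      using opt by blast
    moreover have "(u * K + r) div K = u"
      using r by simp
    ultimately show ?thesis
      using cost_step_le[OF t] unfolding a_def by simp
  qed
  from affine_recurrence_const_le[of a K "\<lambda>t. cost t" "u * K", OF _ this]
  have "cost (u * K + K) - OPT u \<le> a ^ K * (cost (u * K) - OPT u)"
    by (simp add: a_def)
  moreover have "a ^ K = exp (- 1 / real L)"
    using K_pos unfolding a_def exp_of_nat_mult[symmetric] by simp
  ultimately show ?thesis
    by (simp add: algebra_simps add.commute)
qed

end

theorem theorem2:
  fixes nV K L :: nat
    and eps :: "nat \<Rightarrow> real"
    and Vs :: "nat \<Rightarrow> 'r set"
    and p :: "'r \<Rightarrow> nat \<Rightarrow> real"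
    and jj :: "nat \<Rightarrow> 'r" and ll :: "nat \<Rightarrow> nat"
    and b :: "nat \<Rightarrow> nat \<Rightarrow> real" and A :: "nat \<Rightarrow> 'r set" and J :: "nat \<Rightarrow> nat \<Rightarrow> 'r set"
    and OPT :: "nat \<Rightarrow> real"
  assumes "nV > 0" and "K > 0" and "L > 0"
    and "\<forall>i<nV. 0 \<le> eps i \<and> eps i \<le> 1"
    and "\<forall>l<L. finite (Vs l) \<and> card (Vs l) \<ge> K"
    and "\<forall>l<L. \<forall>l'<L. l \<noteq> l' \<longrightarrow> Vs l \<inter> Vs l' = {}"
    and "\<forall>j \<in> (\<Union>l<L. Vs l). \<forall>i<nV. 0 \<le> p j i \<and> p j i \<le> 1"
    and "greedy_run nV K L eps Vs p jj ll b A J"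
    and "\<forall>u. Suc u < L \<longrightarrow> OPT u \<le> OPT (Suc u)"
    and "\<forall>t < L * K. \<exists>S. S \<subseteq> A t \<and> S \<noteq> {} \<and> card S \<le> L * K \<and>
           (\<Sum>i<nV. \<Prod>j\<in>S. p j i) \<le> OPT (t div K)"
  shows "(\<Sum>i<nV. b (L * K) i) \<le> (\<Sum>i<nV. eps i) / exp 1 + (\<Sum>u<L. gamma_coef L u * OPT u)"
proof -
  interpret greedy_setting nV K L eps Vs p jj ll b A J
    using assms(2,4,5,7,8) by unfold_locales auto
  define c where "c = exp (- 1 / real L)"
  have "cost (L * K) \<le> c ^ L * cost (0 * K) + (\<Sum>u<L. c ^ (L - 1 - u) * (1 - c) * OPT u)"
    using affine_recurrence_le[of c L "\<lambda>u. cost (u * K)" OPT L] cost_block_le assms(10)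
    by (simp add: c_def)
  moreover have "c ^ L * cost (0 * K) = (\<Sum>i<nV. eps i) / exp 1"
    using assms(3) unfolding c_def exp_of_nat_mult[symmetric]
    by (simp add: cost_def initial exp_minus field_simps)
  moreover have "(\<Sum>u<L. c ^ (L - 1 - u) * (1 - c) * OPT u) = (\<Sum>u<L. gamma_coef L u * OPT u)"
    by (simp add: gamma_coef_def c_def mult.commute mult.left_commute)
  ultimately show ?thesis
    unfolding cost_def by linarith
qed

end
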